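(* Suppose the Markov chain $\Xi$ on $\mathbb X\subseteq\mathbb R_+$ satisfies $(\mathrm T_{\alpha,\beta,c})$ and that $\liminf_{x\to\infty}(x^\gamma\mu(x))>-\infty$ for some $\gamma$ with $0\le\gamma<\alpha-1$. Then for every $q\ge\frac{\alpha}{1+\gamma}$, all $a$ sufficiently large, and all $x>a$, $\mathbb E_x[\tau_a^q]=\infty$.
   Context: $\theta:=\xi_1-\xi_0$; $\mathbb P_x,\mathbb E_x$ refer to the chain started at $x$; $y_+:=y\mathbf 1\{y\ge0\}$, $y_-:=-y\mathbf 1\{y<0\}$; $\mu(x):=\mathbb E_x[\theta]$; $\tau_a:=\min\{n\ge0:\xi_n\le a\}$. $(\mathrm T_{\alpha,\beta,c})$: there exist $\alpha\in(1,2)$, $\beta>\alpha$, $c>0$, $x_0\in\mathbb R_+$ with $\lim_{y\to\infty}\sup_{x\ge x_0}|y^\alpha\mathbb P_x[\theta_+>y]-c|=0$ and $\sup_{x\ge x_0}\mathbb E_x[\theta_-^\beta]<\infty$. *)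

theory Defs
  imports "HOL-Probability.Probability"
begin

text \<open>Paths are streams of reals; P x is the law of the path
  (xi_0, xi_1, ...) when the chain is started at x, with coordinates xi_n = w !! n.
  The Markov property is expressed by the one-step recursion
  P x = (draw y from K x; then continue as the chain started at y, prefixed by x).\<close>
definition markov_chain_on ::
  "real set \<Rightarrow> (real \<Rightarrow> real measure) \<Rightarrow> (real \<Rightarrow> real stream measure) \<Rightarrow> bool" where
  "markov_chain_on X K P \<longleftrightarrow>
     X \<subseteq> {0..} \<and> X \<in> sets borel \<and>
     K \<in> borel \<rightarrow>\<^sub>M prob_algebra borel \<and>
     P \<in> borel \<rightarrow>\<^sub>M prob_algebra (stream_space borel) \<and>
     (\<forall>x\<in>X. emeasure (K x) X = 1) \<and>
     (\<forall>x\<in>X. P x = K x \<bind> (\<lambda>y. distr (P y) (stream_space borel) (\<lambda>w. x ## w)))"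

definition theta :: "real stream \<Rightarrow> real" where
  "theta w = w !! 1 - w !! 0"

definition pos_part :: "real \<Rightarrow> real" where "pos_part y = (if y \<ge> 0 then y else 0)"
definition neg_part :: "real \<Rightarrow> real" where "neg_part y = (if y < 0 then - y else 0)"

definition mu :: "(real \<Rightarrow> real stream measure) \<Rightarrow> real \<Rightarrow> real" where
  "mu P x = (\<integral>w. theta w \<partial>P x)"

definition hit_time :: "real \<Rightarrow> real stream \<Rightarrow> enat" where
  "hit_time a w = (if \<exists>n. w !! n \<le> a then enat (LEAST n. w !! n \<le> a) else \<infinity>)"

definition hit_time_pow :: "real \<Rightarrow> real \<Rightarrow> real stream \<Rightarrow> ennreal" where
  "hit_time_pow q a w = (case hit_time a w of enat n \<Rightarrow> ennreal (real n powr q) | \<infinity> \<Rightarrow> \<infinity>)"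

definition cond_T ::
  "real set \<Rightarrow> (real \<Rightarrow> real stream measure) \<Rightarrow> real \<Rightarrow> real \<Rightarrow> real \<Rightarrow> bool" where
  "cond_T X P \<alpha> \<beta> c \<longleftrightarrow>
     1 < \<alpha> \<and> \<alpha> < 2 \<and> \<beta> > \<alpha> \<and> c > 0 \<and>
     (\<exists>x0\<ge>0.
        (\<forall>\<epsilon>>0. \<exists>Y. \<forall>y\<ge>Y. \<forall>x\<in>X. x \<ge> x0 \<longrightarrow>
            \<bar>y powr \<alpha> * measure (P x) {w \<in> space (P x). pos_part (theta w) > y} - c\<bar> \<le> \<epsilon>) \<and>
        (\<exists>B::real. \<forall>x\<in>X. x \<ge> x0 \<longrightarrow>
            (\<integral>\<^sup>+w. ennreal (neg_part (theta w) powr \<beta>) \<partial>P x) \<le> ennreal B))"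

end

theory Submission
  imports Defs
begin

text \<open>
  A jump of size about T has probability of order T^-\<alpha>.  Since the drift is at least
  -C x^-\<gamma>, the chain then needs about T^(1+\<gamma>) steps to come back below a, with probability
  bounded below; this follows by optional stopping for the bounded test function
  s^(1+\<gamma>) / (1 + s^(1+\<gamma>)) evaluated at scale T, whose expected increments are
  -O(T^-(1+\<gamma>)) by a second order Taylor bound and the p-th moment of the increment
  for some 1 + \<gamma> < p < \<alpha>.  Every dyadic level T = 2^j therefore contributes at least
  T^-\<alpha> (T^(1+\<gamma>))^q \<ge> const to E_x[\<tau>_a^q], and summing over levels gives infinity.
\<close>

lemma powr_le_one_plus_powr:
  fixes u p q :: real
  assumes "0 \<le> u" "0 \<le> p" "p \<le> q"
  shows "u powr p \<le> 1 + u powr q"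
proof (cases "u \<le> 1")
  case True
  then have "u powr p \<le> 1" using assms powr_le1 by auto
  then show ?thesis by (smt (verit) powr_ge_zero)
next
  case False
  then have "u powr p \<le> u powr q" using assms by (intro powr_mono) auto
  then show ?thesis by simp
qed

lemma one_plus_powr_pos: "0 < 1 + (s::real) powr e"
  by (smt (verit) powr_ge_zero)

lemma nat_floor_ge_half:
  assumes "1 \<le> v"
  shows "v / 2 \<le> real (nat \<lfloor>v\<rfloor>)"
proof -
  have "1 \<le> \<lfloor>v\<rfloor>" using assms by simp
  then have "real (nat \<lfloor>v\<rfloor>) = of_int \<lfloor>v\<rfloor>" "1 \<le> real_of_int \<lfloor>v\<rfloor>" by simp_all
  then show ?thesis using floor_correct[of v] by linarith
qed

lemma dyadic_shell_exists:
  fixes v Y :: real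
  assumes Y: "0 < Y" and v: "Y < v"
  shows "\<exists>k. 2^k * Y < v \<and> v \<le> 2^(Suc k) * Y"
proof -
  obtain n where n: "v / Y < 2^n" using real_arch_pow[of 2 "v / Y"] by auto
  then have ex: "\<exists>n. v \<le> 2^n * Y" using Y by (auto simp: field_simps intro!: exI[of _ n])
  define m where "m = (LEAST n. v \<le> 2^n * Y)"
  have m: "v \<le> 2^m * Y" unfolding m_def by (rule LeastI_ex[OF ex])
  have m0: "m \<noteq> 0"
  proof
    assume "m = 0" then show False using m v by simp
  qed
  then obtain k where k: "m = Suc k" by (cases m) auto
  have "\<not> v \<le> 2^k * Y" using not_less_Least[of k "\<lambda>n. v \<le> 2^n * Y"] k unfolding m_def by simp
  then show ?thesis using m k by (intro exI[of _ k]) auto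
qed

lemma disjoint_family_dyadic_shells: "disjoint_family (\<lambda>j. {(2::real)^j<..2^Suc j})"
proof -
  have "{(2::real)^i<..2^Suc i} \<inter> {2^j<..2^Suc j} = {}" if "i < j" for i j
  proof -
    have "(2::real)^Suc i \<le> 2^j" using that by (intro power_increasing) auto
    then show ?thesis by auto
  qed
  then show ?thesis
    unfolding disjoint_family_on_def by (metis Int_commute linorder_neqE_nat)
qed

lemma suminf_indicator_disjoint_le:
  fixes f :: "nat \<Rightarrow> ennreal"
  assumes "disjoint_family F" and "\<And>j. w \<in> F j \<Longrightarrow> f j \<le> h"
  shows "(\<Sum>j. f j * indicator (F j) w) \<le> h"
proof (cases "\<exists>i. w \<in> F i")
  case True
  then obtain i where i: "w \<in> F i" by blast
  have "(\<Sum>j. f j * indicator (F j) w) = (\<Sum>j\<in>{i}. f j * indicator (F j) w)"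
    using assms(1) i by (intro suminf_finite) (auto simp: disjoint_family_on_def indicator_def)
  then show ?thesis using assms(2)[OF i] i by simp
qed simp

lemma suminf_ennreal_const_infinite:
  assumes "0 < \<delta>"
  shows "(\<Sum>j::nat. ennreal \<delta>) = \<infinity>"
proof (rule ccontr)
  assume "(\<Sum>j::nat. ennreal \<delta>) \<noteq> \<infinity>"
  then have "summable (\<lambda>_::nat. \<delta>)"
    using assms by (intro summable_suminf_not_top) auto
  then show False using assms by (simp add: summable_const_iff)
qed

lemma Liminf_gt_MInf_eventually_ge:
  fixes f :: "'a \<Rightarrow> real"
  assumes "Liminf F (\<lambda>x. ereal (f x)) > -\<infinity>"
  obtains C where "0 \<le> C" "eventually (\<lambda>x. -C \<le> f x) F"
proof -
  obtain r where r: "ereal r < Liminf F (\<lambda>x. ereal (f x))"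
  proof (cases "Liminf F (\<lambda>x. ereal (f x))")
    case (real L)
    then show ?thesis using that[of "L - 1"] by simp
  qed (use assms that[of 0] in auto)
  then have "eventually (\<lambda>x. r < f x) F"
    using less_LiminfD[OF r] by simp
  then show ?thesis
    by (intro that[of "max (-r) 0"]) (auto elim!: eventually_mono)
qed

section \<open>The saturated power s^e / (1 + s^e)\<close>

definition sat_pow :: "real \<Rightarrow> real \<Rightarrow> real" where
  "sat_pow e s = s powr e / (1 + s powr e)"

definition sat_pow' :: "real \<Rightarrow> real \<Rightarrow> real" where
  "sat_pow' e s = e * s powr (e - 1) / (1 + s powr e)^2"

definition sat_pow'' :: "real \<Rightarrow> real \<Rightarrow> real" where
  "sat_pow'' e s = e * ((e - 1) * s powr (e - 2) * (1 + s powr e)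
                        - 2 * e * s powr (e - 1) * s powr (e - 1)) / (1 + s powr e)^3"

lemma sat_pow_measurable[measurable]: "(\<lambda>y. sat_pow e (f y)) \<in> borel_measurable M"
  if [measurable]: "f \<in> borel_measurable M"
  unfolding sat_pow_def by measurable

lemma sat_pow_nonneg: "0 \<le> sat_pow e s"
  unfolding sat_pow_def by (simp add: one_plus_powr_pos)

lemma sat_pow_le_1: "sat_pow e s \<le> 1"
  unfolding sat_pow_def by (simp add: one_plus_powr_pos divide_le_eq)

lemma sat_pow_le_powr: "sat_pow e s \<le> s powr e"
  unfolding sat_pow_def by (simp add: divide_le_eq one_plus_powr_pos mult_le_cancel_left1)

lemma sat_pow_mono:
  assumes "0 \<le> e" "0 \<le> s" "s \<le> t"
  shows "sat_pow e s \<le> sat_pow e t"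
proof -
  have "s powr e \<le> t powr e" using assms by (intro powr_mono2) auto
  then show ?thesis
    unfolding sat_pow_def by (simp add: divide_simps one_plus_powr_pos algebra_simps)
qed

lemma sat_pow_has_derivative: "0 < s \<Longrightarrow> (sat_pow e has_real_derivative sat_pow' e s) (at s)"
  unfolding sat_pow_def sat_pow'_def
  by (rule derivative_eq_intros refl | simp add: one_plus_powr_pos less_imp_neq[symmetric])+
     (simp add: power2_eq_square algebra_simps)

lemma sat_pow'_has_derivative: "0 < s \<Longrightarrow> (sat_pow' e has_real_derivative sat_pow'' e s) (at s)"
  unfolding sat_pow'_def sat_pow''_def
  apply (rule derivative_eq_intros refl | simp add: one_plus_powr_pos less_imp_neq[symmetric])+
  subgoal
  proof -
    define A where "A = 1 + s powr e"
    have "0 < A" unfolding A_def by (rule one_plus_powr_pos)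
    then show ?thesis unfolding A_def[symmetric]
      by (simp add: divide_simps) (simp add: algebra_simps power2_eq_square power3_eq_cube power4_eq_xxxx)
  qed
  done

lemma sat_pow'_nonneg: "0 \<le> e \<Longrightarrow> 0 \<le> sat_pow' e s"
  unfolding sat_pow'_def by simp

lemma sat_pow'_le:
  assumes "0 \<le> s" "1 \<le> e"
  shows "sat_pow' e s \<le> e"
proof -
  define A where "A = 1 + s powr e"
  have A: "1 \<le> A" unfolding A_def by simp
  have "s powr (e - 1) \<le> A"
    unfolding A_def using assms by (intro powr_le_one_plus_powr) auto
  also have "A \<le> A^2" using A by (simp add: power2_eq_square)
  finally have "e * s powr (e - 1) \<le> e * A^2" using assms by simp
  then show ?thesis unfolding sat_pow'_def A_def[symmetric] using A by (simp add: field_simps)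
qed

lemma sat_pow'_le_powr:
  assumes "0 \<le> e"
  shows "sat_pow' e s \<le> e * s powr (e - 1)"
proof -
  have "1 \<le> (1 + s powr e)^2" by simp
  moreover have "0 \<le> e * s powr (e - 1)" using assms by simp
  ultimately show ?thesis
    unfolding sat_pow'_def by (simp add: divide_le_eq mult_le_cancel_left1)
qed

lemma sat_pow''_ge:
  assumes s: "0 \<le> s" and e: "1 \<le> e" "e \<le> 2"
  shows "-8 \<le> sat_pow'' e s"
proof -
  define A where "A = 1 + s powr e"
  have A: "1 \<le> A" unfolding A_def by simp
  define q where "q = s powr (e - 1)"
  have q: "0 \<le> q" "q \<le> A"
    unfolding q_def A_def using s e by (auto intro: powr_le_one_plus_powr)
  define U where "U = e * ((e - 1) * s powr (e - 2) * A)"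
  have U: "0 \<le> U" unfolding U_def using e A by (intro mult_nonneg_nonneg) auto
  define V where "V = e * (2 * e * q * q)"
  have "q * q \<le> A * A" using q by (intro mult_mono) auto
  also have "\<dots> \<le> A^3" using A by (simp add: power3_eq_cube)
  finally have qq: "q * q \<le> A^3" .
  have ee: "e * e \<le> 2 * 2" by (rule mult_mono) (use e in auto)
  have "V = (2 * (e * e)) * (q * q)" unfolding V_def by (simp add: algebra_simps)
  also have "\<dots> \<le> 8 * A^3" by (rule mult_mono) (use ee qq q in auto)
  finally have "-8 * A^3 \<le> U - V" using U by simp
  moreover have "sat_pow'' e s = (U - V) / A^3"
    unfolding sat_pow''_def U_def V_def A_def q_def by (simp add: right_diff_distrib)
  ultimately show ?thesis using A by (simp add: le_divide_eq)
qed

lemma sat_pow_above_tangent: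
  assumes s: "0 < s" and t: "0 < t" and e: "1 \<le> e" "e \<le> 2"
  shows "sat_pow e s + sat_pow' e s * (t - s) - 4 * (t - s)^2 \<le> sat_pow e t"
proof -
  define f where "f = (\<lambda>x. sat_pow e x + 4 * x^2)"
  have cv: "convex_on {0<..} f"
  proof (rule f''_ge0_imp_convex[where f' = "\<lambda>x. sat_pow' e x + 8 * x" and f'' = "\<lambda>x. sat_pow'' e x + 8"])
    show "convex ({0<..} :: real set)" by simp
    fix x :: real assume x: "x \<in> {0<..}"
    show "DERIV f x :> sat_pow' e x + 8 * x" unfolding f_def
      using x by (auto intro!: derivative_eq_intros sat_pow_has_derivative)
    show "DERIV (\<lambda>x. sat_pow' e x + 8 * x) x :> sat_pow'' e x + 8"
      using x by (auto intro!: derivative_eq_intros sat_pow'_has_derivative)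
    show "0 \<le> sat_pow'' e x + 8" using sat_pow''_ge[of x e] x e by auto
  qed
  have d0: "DERIV f s :> sat_pow' e s + 8 * s" unfolding f_def
      using s by (auto intro!: derivative_eq_intros sat_pow_has_derivative)
  have d: "(f has_field_derivative sat_pow' e s + 8 * s) (at s within {0<..})"
    by (rule has_field_derivative_at_within[OF d0])
  have "(sat_pow' e s + 8 * s) * (t - s) \<le> f t - f s"
    by (rule convex_on_imp_above_tangent[OF cv _ _ _ d]) (use s t in \<open>auto simp: interior_open\<close>)
  then show ?thesis unfolding f_def by (simp add: power2_eq_square algebra_simps)
qed

lemma sat_pow_lipschitz:
  assumes s: "0 < s" and t: "0 < t" and e: "1 \<le> e"
  shows "\<bar>sat_pow e t - sat_pow e s\<bar> \<le> e * \<bar>t - s\<bar>"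
proof -
  have "norm (sat_pow e t - sat_pow e s) \<le> e * norm (t - s)"
  proof (rule field_differentiable_bound[where S="{0<..}" and f'="sat_pow' e"])
    show "convex ({0<..} :: real set)" by simp
    fix z :: real assume z: "z \<in> {0<..}"
    show "(sat_pow e has_field_derivative sat_pow' e z) (at z within {0<..})"
      using sat_pow_has_derivative z by (auto intro: has_field_derivative_at_within)
    show "norm (sat_pow' e z) \<le> e" using sat_pow'_le[of z e] sat_pow'_nonneg[of e z] z e by auto
  qed (use s t in auto)
  then show ?thesis by simp
qed

lemma sat_pow_taylor_lower:
  assumes s: "0 < s" and t: "0 < t" and e: "1 \<le> e" "e \<le> 2" and p: "1 \<le> p" "p \<le> 2"
  shows "sat_pow e s + sat_pow' e s * (t - s) - 4 * \<bar>t - s\<bar> powr p \<le> sat_pow e t"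
proof (cases "\<bar>t - s\<bar> \<le> 1")
  case True
  have "\<bar>t - s\<bar> powr 2 \<le> \<bar>t - s\<bar> powr p"
    using True p by (intro powr_mono') auto
  then have "(t - s)^2 \<le> \<bar>t - s\<bar> powr p"
    by simp
  then show ?thesis using sat_pow_above_tangent[OF s t e] by linarith
next
  case False
  have "\<bar>t - s\<bar> powr 1 \<le> \<bar>t - s\<bar> powr p"
    using False p by (intro powr_mono) auto
  then have a: "\<bar>t - s\<bar> \<le> \<bar>t - s\<bar> powr p" using False by simp
  have b: "sat_pow e s - e * \<bar>t - s\<bar> \<le> sat_pow e t"
    using sat_pow_lipschitz[OF s t e(1)] by linarith
  have c: "\<bar>sat_pow' e s * (t - s)\<bar> \<le> e * \<bar>t - s\<bar>"
    using sat_pow'_le[of s e] sat_pow'_nonneg[of e s] s e by (simp add: abs_mult mult_right_mono)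
  have "e * \<bar>t - s\<bar> \<le> 2 * \<bar>t - s\<bar>" using e by (simp add: mult_right_mono)
  moreover have "sat_pow' e s * (t - s) \<le> \<bar>sat_pow' e s * (t - s)\<bar>" by simp
  ultimately show ?thesis using a b c by (smt (verit))
qed

lemma sat_pow'_drift_term_ge:
  fixes x z \<gamma> C m :: real
  assumes x: "1 \<le> x" and z: "1 \<le> z" and \<gamma>: "0 \<le> \<gamma>" "\<gamma> \<le> 1" and C: "0 \<le> C"
    and drift: "-C \<le> x powr \<gamma> * m"
  shows "- (4 * C / z powr (1 + \<gamma>)) \<le> sat_pow' (1 + \<gamma>) ((x + 1) / z) / z * m"
proof (cases "0 \<le> m")
  case True
  have "0 \<le> sat_pow' (1 + \<gamma>) ((x + 1) / z) / z * m"
    using True \<gamma> z by (simp add: sat_pow'_nonneg)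
  moreover have "0 \<le> 4 * C / z powr (1 + \<gamma>)" using C by simp
  ultimately show ?thesis by linarith
next
  case False
  define D where "D = sat_pow' (1 + \<gamma>) ((x + 1) / z) / z"
  have D: "0 \<le> D" unfolding D_def using \<gamma> z by (simp add: sat_pow'_nonneg)
  have "- m \<le> C / x powr \<gamma>" using drift x by (simp add: field_simps)
  moreover have "D \<le> (1 + \<gamma>) * ((x + 1) / z) powr \<gamma> / z"
    unfolding D_def using sat_pow'_le_powr[of "1 + \<gamma>" "(x + 1) / z"] \<gamma> z by (simp add: divide_right_mono)
  ultimately have "D * (- m) \<le> ((1 + \<gamma>) * ((x + 1) / z) powr \<gamma> / z) * (C / x powr \<gamma>)"
    using D False by (intro mult_mono) auto
  also have "\<dots> = (1 + \<gamma>) * C * ((x + 1) / x) powr \<gamma> / z powr (1 + \<gamma>)"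
    using x z by (simp add: powr_divide powr_add field_simps)
  also have "\<dots> \<le> 2 * C * 2 / z powr (1 + \<gamma>)"
  proof -
    have "((x + 1) / x) powr \<gamma> \<le> 2 powr \<gamma>" using x \<gamma> by (intro powr_mono2) (auto simp: field_simps)
    also have "\<dots> \<le> 2 powr 1" using \<gamma> by (intro powr_mono) auto
    finally have "(1 + \<gamma>) * C * ((x + 1) / x) powr \<gamma> \<le> 2 * C * 2"
      using \<gamma> C by (intro mult_mono) auto
    then show ?thesis using z by (simp add: divide_right_mono)
  qed
  finally show ?thesis unfolding D_def by simp
qed

section \<open>Moments from tail bounds\<close>

lemma (in prob_space) nn_integral_powr_le_of_tail:
  fixes f :: "'a \<Rightarrow> real"
  assumes fm: "f \<in> borel_measurable M" and f0: "\<And>x. 0 \<le> f x"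
    and Y: "1 \<le> Y" and p: "0 < p" "p < \<alpha>" and C: "0 \<le> C"
    and tail: "\<And>t. Y \<le> t \<Longrightarrow> measure M {x\<in>space M. t < f x} \<le> C * t powr (-\<alpha>)"
  shows "(\<integral>\<^sup>+x. ennreal (f x powr p) \<partial>M) \<le> ennreal (Y powr p + C * 2 powr p * Y powr (p - \<alpha>) / (1 - 2 powr (p - \<alpha>)))"
proof -
  define r where "r = (2::real) powr (p - \<alpha>)"
  have r: "0 < r" "r < 1" unfolding r_def using p powr_less_mono[of "p - \<alpha>" 0 "2::real"] by auto
  define c where "c k = ((2::real)^(Suc k) * Y) powr p" for k
  define A where "A k = {x\<in>space M. 2^k * Y < f x}" for k
  have A[measurable]: "A k \<in> sets M" for k unfolding A_def using fm by measurable
  have pw: "ennreal (f x powr p) \<le> ennreal (Y powr p) + (\<Sum>k. ennreal (c k) * indicator (A k) x)" if x: "x \<in> space M" for x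
  proof (cases "f x \<le> Y")
    case True
    then have "f x powr p \<le> Y powr p" using f0 p by (intro powr_mono2) auto
    then show ?thesis by (simp add: add_increasing2)
  next
    case False
    then obtain k where k: "2^k * Y < f x" "f x \<le> 2^(Suc k) * Y" using dyadic_shell_exists[of Y "f x"] Y by auto
    have "f x powr p \<le> c k" unfolding c_def using k f0 p by (intro powr_mono2) auto
    then have "ennreal (f x powr p) \<le> ennreal (c k) * indicator (A k) x"
      using k x by (simp add: A_def ennreal_leI)
    also have "\<dots> \<le> (\<Sum>k. ennreal (c k) * indicator (A k) x)"
      using sum_le_suminf[OF summableI, of "{k}"] by simp
    finally show ?thesis by (simp add: add_increasing)
  qed
  have "(\<integral>\<^sup>+x. ennreal (f x powr p) \<partial>M) \<le> (\<integral>\<^sup>+x. ennreal (Y powr p) + (\<Sum>k. ennreal (c k) * indicator (A k) x) \<partial>M)"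
    by (rule nn_integral_mono) (use pw in auto)
  also have "\<dots> = ennreal (Y powr p) + (\<Sum>k. ennreal (c k) * emeasure M (A k))"
    by (subst nn_integral_add) (auto simp: nn_integral_suminf nn_integral_cmult_indicator emeasure_space_1)
  also have "(\<Sum>k. ennreal (c k) * emeasure M (A k)) \<le> (\<Sum>k. ennreal (C * 2 powr p * Y powr (p - \<alpha>) * r^k))"
  proof (rule suminf_le[OF _ summableI summableI])
    fix k
    have t: "measure M (A k) \<le> C * (2^k * Y) powr (-\<alpha>)"
      unfolding A_def by (rule tail) (use Y in \<open>simp add: mult_le_cancel_right1 one_le_power\<close>)
    have "c k * (C * (2^k * Y) powr (-\<alpha>)) = C * 2 powr p * Y powr (p - \<alpha>) * r^k"
    proof -
      have "c k = 2 powr p * (2^k) powr p * Y powr p"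
        unfolding c_def using Y by (simp add: powr_mult)
      moreover have "(2^k * Y) powr (-\<alpha>) = (2^k) powr (-\<alpha>) * Y powr (-\<alpha>)"
        using Y by (simp add: powr_mult)
      moreover have "(2^k) powr p * (2^k) powr (-\<alpha>) = r^k"
        unfolding r_def by (simp add: powr_add[symmetric] powr_realpow[symmetric] powr_powr powr_power algebra_simps)
      moreover have "Y powr p * Y powr (-\<alpha>) = Y powr (p - \<alpha>)" by (simp add: powr_add[symmetric])
      ultimately show ?thesis by (simp add: algebra_simps)
    qed
    then have "c k * measure M (A k) \<le> C * 2 powr p * Y powr (p - \<alpha>) * r^k"
      using t unfolding c_def by (metis mult_left_mono powr_ge_zero)
    then show "ennreal (c k) * emeasure M (A k) \<le> ennreal (C * 2 powr p * Y powr (p - \<alpha>) * r^k)"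
      by (simp add: emeasure_eq_measure ennreal_mult[symmetric] c_def ennreal_leI)
  qed
  also have "\<dots> = ennreal (C * 2 powr p * Y powr (p - \<alpha>) / (1 - r))"
  proof -
    have s: "summable (\<lambda>k. C * 2 powr p * Y powr (p - \<alpha>) * r^k)"
      using r by (intro summable_mult summable_geometric) auto
    have "(\<Sum>k. C * 2 powr p * Y powr (p - \<alpha>) * r^k) = C * 2 powr p * Y powr (p - \<alpha>) / (1 - r)"
      using r by (subst suminf_mult) (auto simp: summable_geometric suminf_geometric)
    then show ?thesis using s r C by (subst suminf_ennreal2) auto
  qed
  finally show ?thesis unfolding r_def
    by (smt (verit) add_left_mono ennreal_plus order_trans powr_ge_zero divide_nonneg_nonneg mult_nonneg_nonneg C r(2) r_def)
qed

lemma abs_powr_eq_pos_part_plus_neg_part: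
  "0 < p \<Longrightarrow> \<bar>v\<bar> powr p = pos_part v powr p + neg_part v powr p"
  unfolding pos_part_def neg_part_def by auto

lemma (in prob_space) abs_powr_moment_of_tails:
  fixes f :: "'a \<Rightarrow> real"
  assumes f[measurable]: "f \<in> borel_measurable M"
    and Y: "1 \<le> Y" and p: "1 \<le> p" "p < \<alpha>" "p \<le> \<beta>" and C: "0 \<le> C" and B: "0 \<le> B"
    and tail: "\<And>t. Y \<le> t \<Longrightarrow> prob {x\<in>space M. t < pos_part (f x)} \<le> C * t powr (-\<alpha>)"
    and neg: "(\<integral>\<^sup>+x. ennreal (neg_part (f x) powr \<beta>) \<partial>M) \<le> ennreal B"
  defines "R \<equiv> Y powr p + C * 2 powr p * Y powr (p - \<alpha>) / (1 - 2 powr (p - \<alpha>)) + 1 + B"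
  shows "integrable M f" "integrable M (\<lambda>x. \<bar>f x\<bar> powr p)" "(\<integral>x. \<bar>f x\<bar> powr p \<partial>M) \<le> R"
proof -
  have pos_meas[measurable]: "(\<lambda>x. pos_part (f x)) \<in> borel_measurable M"
    unfolding pos_part_def by measurable
  have neg_meas[measurable]: "(\<lambda>x. neg_part (f x)) \<in> borel_measurable M"
    unfolding neg_part_def by measurable
  have "2 powr (p - \<alpha>) < (1::real)" using p by (intro powr_less_one) auto
  then have tail_const: "0 \<le> C * 2 powr p * Y powr (p - \<alpha>) / (1 - 2 powr (p - \<alpha>))"
    using C by simp
  have pos_moment: "(\<integral>\<^sup>+x. ennreal (pos_part (f x) powr p) \<partial>M)
      \<le> ennreal (Y powr p + C * 2 powr p * Y powr (p - \<alpha>) / (1 - 2 powr (p - \<alpha>)))"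
    using p by (intro nn_integral_powr_le_of_tail[OF pos_meas _ Y _ _ C tail])
       (auto simp: pos_part_def)
  have "ennreal (neg_part (f x) powr p) \<le> 1 + ennreal (neg_part (f x) powr \<beta>)" for x
  proof -
    have "neg_part (f x) powr p \<le> 1 + neg_part (f x) powr \<beta>"
      using p by (intro powr_le_one_plus_powr) (auto simp: neg_part_def)
    then have "ennreal (neg_part (f x) powr p) \<le> ennreal (1 + neg_part (f x) powr \<beta>)"
      by (rule ennreal_leI)
    then show ?thesis by (simp add: ennreal_plus)
  qed
  then have "(\<integral>\<^sup>+x. ennreal (neg_part (f x) powr p) \<partial>M) \<le> (\<integral>\<^sup>+x. 1 + ennreal (neg_part (f x) powr \<beta>) \<partial>M)"
    by (intro nn_integral_mono)
  also have "\<dots> = 1 + (\<integral>\<^sup>+x. ennreal (neg_part (f x) powr \<beta>) \<partial>M)"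
    by (subst nn_integral_add) (auto simp: emeasure_space_1)
  also have "\<dots> \<le> ennreal (1 + B)"
    using neg B by (simp add: ennreal_plus add_left_mono)
  finally have neg_moment: "(\<integral>\<^sup>+x. ennreal (neg_part (f x) powr p) \<partial>M) \<le> ennreal (1 + B)" .
  have "(\<integral>\<^sup>+x. ennreal (\<bar>f x\<bar> powr p) \<partial>M)
      = (\<integral>\<^sup>+x. ennreal (pos_part (f x) powr p) + ennreal (neg_part (f x) powr p) \<partial>M)"
    using p by (intro nn_integral_cong) (simp add: abs_powr_eq_pos_part_plus_neg_part ennreal_plus)
  also have "\<dots> = (\<integral>\<^sup>+x. ennreal (pos_part (f x) powr p) \<partial>M) + (\<integral>\<^sup>+x. ennreal (neg_part (f x) powr p) \<partial>M)"
    by (rule nn_integral_add) measurable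
  also have "\<dots> \<le> ennreal R"
    using add_mono[OF pos_moment neg_moment] tail_const B
    by (simp add: R_def ennreal_plus[symmetric] add.assoc del: ennreal_plus)
  finally have moment: "(\<integral>\<^sup>+x. ennreal (\<bar>f x\<bar> powr p) \<partial>M) \<le> ennreal R" .
  show int_powr: "integrable M (\<lambda>x. \<bar>f x\<bar> powr p)"
    using moment by (intro integrableI_bounded) (auto simp: top_unique less_top[symmetric])
  show "integrable M f"
  proof (rule Bochner_Integration.integrable_bound[OF _ _ AE_I2])
    show "integrable M (\<lambda>x. 1 + \<bar>f x\<bar> powr p)" using int_powr by simp
    show "norm (f x) \<le> norm (1 + \<bar>f x\<bar> powr p)" for x
      using powr_le_one_plus_powr[of "\<bar>f x\<bar>" 1 p] p by simp
  qed simp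
  have "ennreal (\<integral>x. \<bar>f x\<bar> powr p \<partial>M) \<le> ennreal R"
    using moment by (subst nn_integral_eq_integral[OF int_powr, symmetric]) auto
  moreover have "0 \<le> R" unfolding R_def using tail_const B by (simp add: add_nonneg_nonneg)
  ultimately show "(\<integral>x. \<bar>f x\<bar> powr p \<partial>M) \<le> R" by (simp add: ennreal_le_iff)
qed

section \<open>Paths and hitting times\<close>

abbreviation paths :: "real stream measure" where
  "paths \<equiv> stream_space borel"

lemma space_paths: "space paths = UNIV"
  by (simp add: space_stream_space)

lemma UNIV_in_sets_paths[simp]: "UNIV \<in> sets paths"
  using sets.top[of paths] by (simp add: space_paths)

lemma theta_measurable[measurable]: "theta \<in> borel_measurable paths"
  unfolding theta_def by measurable

definition stays_above :: "real \<Rightarrow> nat \<Rightarrow> real stream set" where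
  "stays_above a n = {w. \<forall>k\<le>n. a < w !! k}"

lemma stays_above_measurable[measurable]: "stays_above a n \<in> sets paths"
proof -
  have "stays_above a n = (\<Inter>k\<in>{..n}. {w\<in>space paths. a < w !! k}) \<inter> space paths"
    by (auto simp: stays_above_def space_paths)
  also have "\<dots> \<in> sets paths" by measurable
  finally show ?thesis .
qed

lemma Cons_stays_above_Suc:
  "x ## w \<in> stays_above a (Suc n) \<longleftrightarrow> a < x \<and> w \<in> stays_above a n"
  unfolding stays_above_def by (auto simp: All_less_Suc2 less_Suc_eq_le[symmetric])

lemma stays_above_0: "stays_above a 0 = {w. shd w \<in> {a<..}}"
  by (simp add: stays_above_def)

lemma hit_time_pow_ge:
  assumes "w \<in> stays_above a n" "0 \<le> q"
  shows "ennreal (real n powr q) \<le> hit_time_pow q a w"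
proof (cases "\<exists>m. w !! m \<le> a")
  case True
  define L where "L = (LEAST m. w !! m \<le> a)"
  have "w !! L \<le> a" unfolding L_def using True by (rule LeastI_ex)
  then have "n < L" using assms(1) by (auto simp: stays_above_def not_less[symmetric])
  then have "real n powr q \<le> real L powr q" using assms(2) by (intro powr_mono2) auto
  then show ?thesis using True unfolding hit_time_pow_def hit_time_def L_def by (simp add: ennreal_leI)
next
  case False
  then show ?thesis unfolding hit_time_pow_def hit_time_def by simp
qed

lemma cond_T_tail_bounds:
  assumes "cond_T X P \<alpha> \<beta> c"
  obtains x0 Y B where "1 \<le> Y" "0 \<le> B"
   "\<And>t x. Y \<le> t \<Longrightarrow> x \<in> X \<Longrightarrow> x0 \<le> x \<Longrightarrow>
       measure (P x) {w\<in>space (P x). t < pos_part (theta w)} \<le> (5 * c / 4) * t powr (-\<alpha>)"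
   "\<And>t x. Y \<le> t \<Longrightarrow> x \<in> X \<Longrightarrow> x0 \<le> x \<Longrightarrow>
       (3 * c / 4) * t powr (-\<alpha>) \<le> measure (P x) {w\<in>space (P x). t < pos_part (theta w)}"
   "\<And>x. x \<in> X \<Longrightarrow> x0 \<le> x \<Longrightarrow> (\<integral>\<^sup>+w. ennreal (neg_part (theta w) powr \<beta>) \<partial>P x) \<le> ennreal B"
proof -
  from assms have c: "c > 0" unfolding cond_T_def by auto
  from assms obtain x0
    where tl: "\<forall>\<epsilon>>0. \<exists>Y. \<forall>y\<ge>Y. \<forall>x\<in>X. x \<ge> x0 \<longrightarrow>
            \<bar>y powr \<alpha> * measure (P x) {w \<in> space (P x). pos_part (theta w) > y} - c\<bar> \<le> \<epsilon>"
    and nb: "\<exists>B::real. \<forall>x\<in>X. x \<ge> x0 \<longrightarrow>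
            (\<integral>\<^sup>+w. ennreal (neg_part (theta w) powr \<beta>) \<partial>P x) \<le> ennreal B"
    unfolding cond_T_def by blast
  obtain Y where Y: "\<forall>y\<ge>Y. \<forall>x\<in>X. x \<ge> x0 \<longrightarrow>
            \<bar>y powr \<alpha> * measure (P x) {w \<in> space (P x). pos_part (theta w) > y} - c\<bar> \<le> c / 4"
    using tl c by (meson divide_pos_pos zero_less_numeral)
  obtain B where B: "\<forall>x\<in>X. x \<ge> x0 \<longrightarrow>
            (\<integral>\<^sup>+w. ennreal (neg_part (theta w) powr \<beta>) \<partial>P x) \<le> ennreal B" using nb by blast
  show ?thesis
  proof (rule that[of "max Y 1" "max B 0"])
    show "1 \<le> max Y 1" "0 \<le> max B 0" by auto
  next
    fix x assume "x \<in> X" "x0 \<le> x"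
    then have "(\<integral>\<^sup>+w. ennreal (neg_part (theta w) powr \<beta>) \<partial>P x) \<le> ennreal B" using B by blast
    also have "\<dots> \<le> ennreal (max B 0)" by (rule ennreal_leI) simp
    finally show "(\<integral>\<^sup>+w. ennreal (neg_part (theta w) powr \<beta>) \<partial>P x) \<le> ennreal (max B 0)" .
  next
    fix t x assume t: "max Y 1 \<le> t" and x: "x \<in> X" "x0 \<le> x"
    have tp: "0 < t powr \<alpha>" using t by simp
    have dev: "\<bar>t powr \<alpha> * measure (P x) {w \<in> space (P x). pos_part (theta w) > t} - c\<bar> \<le> c / 4"
      using Y t x by auto
    have h: "t powr \<alpha> * measure (P x) {w \<in> space (P x). t < pos_part (theta w)} \<le> 5 * c / 4"
      "3 * c / 4 \<le> t powr \<alpha> * measure (P x) {w \<in> space (P x). t < pos_part (theta w)}"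
      using abs_le_D1[OF dev] abs_le_D2[OF dev] by linarith+
    have inv: "t powr (-\<alpha>) = 1 / t powr \<alpha>" using t by (simp add: powr_minus_divide)
    show "measure (P x) {w\<in>space (P x). t < pos_part (theta w)} \<le> (5 * c / 4) * t powr (-\<alpha>)"
      using h(1) tp unfolding inv by (simp add: field_simps)
    show "(3 * c / 4) * t powr (-\<alpha>) \<le> measure (P x) {w\<in>space (P x). t < pos_part (theta w)}"
      using h(2) tp unfolding inv by (simp add: field_simps)
  qed
qed

section \<open>Markov chains on the half-line\<close>

locale real_markov_chain =
  fixes X :: "real set" and K :: "real \<Rightarrow> real measure" and P :: "real \<Rightarrow> real stream measure"
  assumes markov_chain: "markov_chain_on X K P"
begin

lemma state_space_nonneg: "x \<in> X \<Longrightarrow> 0 \<le> x"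
  using markov_chain unfolding markov_chain_on_def by auto

lemma sets_state_space[measurable]: "X \<in> sets borel"
  using markov_chain unfolding markov_chain_on_def by auto

lemma P_in_prob_algebra: "P y \<in> space (prob_algebra paths)"
  using markov_chain unfolding markov_chain_on_def by (auto intro: measurable_space)

lemma K_in_prob_algebra: "K y \<in> space (prob_algebra borel)"
  using markov_chain unfolding markov_chain_on_def by (auto intro: measurable_space)

lemma prob_space_P: "prob_space (P y)"
  using P_in_prob_algebra unfolding space_prob_algebra by blast

lemma sets_P[measurable_cong]: "sets (P y) = sets paths"
  using P_in_prob_algebra unfolding space_prob_algebra by blast

lemma theta_measurable_P: "theta \<in> borel_measurable (P y)"
  by (subst measurable_cong_sets[OF sets_P refl]) (rule theta_measurable)

lemma space_P: "space (P y) = UNIV"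
  using sets_eq_imp_space_eq[OF sets_P] by (simp add: space_paths)

lemma emeasure_P_UNIV[simp]: "emeasure (P y) UNIV = 1"
  using prob_space.emeasure_space_1[OF prob_space_P] by (simp add: space_P)

lemma prob_space_K: "prob_space (K y)"
  using K_in_prob_algebra unfolding space_prob_algebra by blast

lemma sets_K[measurable_cong]: "sets (K y) = sets borel"
  using K_in_prob_algebra unfolding space_prob_algebra by blast

lemma space_K: "space (K y) = UNIV"
  using sets_eq_imp_space_eq[OF sets_K] by simp

lemma emeasure_P_eq_measure: "emeasure (P y) A = ennreal (measure (P y) A)"
  using prob_space_P by (rule finite_measure.emeasure_eq_measure[OF prob_space.axioms(1)])

lemma P_measurable: "P \<in> borel \<rightarrow>\<^sub>M subprob_algebra paths"
  using markov_chain unfolding markov_chain_on_def by (blast intro: measurable_prob_algebraD)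

lemma measurable_measure_P:
  assumes "A \<in> sets paths"
  shows "(\<lambda>y. measure (P y) A) \<in> borel_measurable (K x)"
  by (subst measurable_cong_sets[OF sets_K refl])
    (rule measurable_compose[OF P_measurable measurable_measure_subprob_algebra[OF assms]])

lemma emeasure_P_step:
  assumes x: "x \<in> X" and A: "A \<in> sets paths"
  shows "emeasure (P x) A = (\<integral>\<^sup>+y. emeasure (P y) {w. x ## w \<in> A} \<partial>K x)"
proof -
  have "(\<lambda>M. distr M paths (\<lambda>w. x ## w)) \<in> subprob_algebra paths \<rightarrow>\<^sub>M subprob_algebra paths"
    by (rule measurable_distr) measurable
  then have F: "(\<lambda>y. distr (P y) paths (\<lambda>w. x ## w)) \<in> K x \<rightarrow>\<^sub>M subprob_algebra paths"
    using P_measurable by (subst measurable_cong_sets[OF sets_K refl]) (rule measurable_compose[rotated])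
  have "emeasure (P x) A = (\<integral>\<^sup>+y. emeasure (distr (P y) paths (\<lambda>w. x ## w)) A \<partial>K x)"
    using markov_chain x unfolding markov_chain_on_def
    by (auto intro!: emeasure_bind[OF _ F A] simp: space_K)
  also have "\<dots> = (\<integral>\<^sup>+y. emeasure (P y) {w. x ## w \<in> A} \<partial>K x)"
    using A by (intro nn_integral_cong) (simp add: emeasure_distr vimage_def space_P)
  finally show ?thesis .
qed

lemma AE_P_start:
  assumes "y \<in> X"
  shows "AE w in P y. w !! 0 = y"
proof -
  have m: "{w \<in> space paths. w !! 0 \<noteq> y} \<in> sets paths" by measurable
  then have "emeasure (P y) {w. w !! 0 \<noteq> y} = 0"
    using emeasure_P_step[OF assms, of "{w. w !! 0 \<noteq> y}"] by (simp add: space_paths)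
  then show ?thesis
    using m by (intro AE_I[of _ _ "{w. w !! 0 \<noteq> y}"]) (auto simp: space_P sets_P space_paths)
qed

lemma AE_K_state_space:
  assumes "x \<in> X"
  shows "AE y in K x. y \<in> X"
proof -
  interpret prob_space "K x" by (rule prob_space_K)
  have "prob X = 1"
    using markov_chain assms unfolding markov_chain_on_def by (auto simp: emeasure_eq_measure)
  then show ?thesis by (rule AE_prob_1)
qed

lemma emeasure_P_start_in:
  assumes "y \<in> X" and [measurable]: "A \<in> sets borel" "B \<in> sets paths"
  shows "emeasure (P y) ({w. shd w \<in> A} \<inter> B) = indicator A y * emeasure (P y) B"
proof -
  have "emeasure (P y) ({w. shd w \<in> A} \<inter> B) = emeasure (P y) (if y \<in> A then B else {})"
  proof (rule emeasure_eq_AE)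
    have "{w \<in> space paths. shd w \<in> A} \<inter> B \<in> sets paths" by measurable
    then show "{w. shd w \<in> A} \<inter> B \<in> sets (P y)" by (simp add: sets_P space_paths)
  qed (use AE_P_start[OF assms(1)] in \<open>auto simp: sets_P\<close>)
  then show ?thesis by simp
qed

lemma emeasure_P_start:
  assumes "y \<in> X" and "A \<in> sets borel"
  shows "emeasure (P y) {w. shd w \<in> A} = indicator A y"
  using emeasure_P_start_in[OF assms, of UNIV] by simp

lemma distr_P_first_step:
  assumes x: "x \<in> X"
  shows "distr (P x) borel (\<lambda>w. w !! 1) = K x"
proof (rule measure_eqI)
  fix A assume "A \<in> sets (distr (P x) borel (\<lambda>w. w !! 1))"
  then have A[measurable]: "A \<in> sets borel" by simp
  have "{w \<in> space paths. w !! 1 \<in> A} \<in> sets paths" by measurable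
  then have "emeasure (P x) {w. w !! 1 \<in> A} = (\<integral>\<^sup>+y. emeasure (P y) {w. shd w \<in> A} \<partial>K x)"
    using emeasure_P_step[OF x] by (simp add: space_paths)
  also have "\<dots> = (\<integral>\<^sup>+y. indicator A y \<partial>K x)"
    using AE_K_state_space[OF x]
    by (intro nn_integral_cong_AE) (auto elim!: eventually_mono simp: emeasure_P_start)
  finally show "emeasure (distr (P x) borel (\<lambda>w. w !! 1)) A = emeasure (K x) A"
    by (simp add: emeasure_distr vimage_def space_P sets_K)
qed (simp add: sets_K)

lemma emeasure_first_step_stays_above:
  assumes x: "x \<in> X" "a < x" and [measurable]: "I \<in> sets borel"
  shows "emeasure (P x) ({w. w !! 1 \<in> I} \<inter> stays_above a (Suc n))
       = (\<integral>\<^sup>+y. indicator I y * emeasure (P y) (stays_above a n) \<partial>K x)"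
proof -
  have "{w \<in> space paths. w !! 1 \<in> I} \<inter> stays_above a (Suc n) \<in> sets paths" by measurable
  then have "emeasure (P x) ({w. w !! 1 \<in> I} \<inter> stays_above a (Suc n))
      = (\<integral>\<^sup>+y. emeasure (P y) ({w. shd w \<in> I} \<inter> stays_above a n) \<partial>K x)"
    using emeasure_P_step[OF x(1)] x(2) by (simp add: space_paths Cons_stays_above_Suc Int_def)
  also have "\<dots> = (\<integral>\<^sup>+y. indicator I y * emeasure (P y) (stays_above a n) \<partial>K x)"
    using AE_K_state_space[OF x(1)]
    by (intro nn_integral_cong_AE) (auto elim!: eventually_mono intro: emeasure_P_start_in)
  finally show ?thesis .
qed

lemma measure_stays_above_Suc:
  assumes x: "x \<in> X" "a < x"
  shows "measure (P x) (stays_above a (Suc n)) = (\<integral>y. measure (P y) (stays_above a n) \<partial>K x)"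
proof -
  interpret K: prob_space "K x" by (rule prob_space_K)
  have int: "integrable (K x) (\<lambda>y. measure (P y) (stays_above a n))"
    by (intro K.integrable_const_bound[where B=1] measurable_measure_P)
       (auto intro: prob_space.prob_le_1[OF prob_space_P])
  have "emeasure (P x) (stays_above a (Suc n)) = (\<integral>\<^sup>+y. ennreal (measure (P y) (stays_above a n)) \<partial>K x)"
    using emeasure_first_step_stays_above[OF x, of UNIV n] by (simp add: emeasure_P_eq_measure)
  also have "\<dots> = ennreal (\<integral>y. measure (P y) (stays_above a n) \<partial>K x)"
    by (rule nn_integral_eq_integral[OF int]) simp
  finally show ?thesis by (simp add: emeasure_P_eq_measure)
qed

lemma measure_stays_above_0:
  assumes "y \<in> X"
  shows "measure (P y) (stays_above a 0) = (if a < y then 1 else 0)"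
  using emeasure_P_start[OF assms, of "{a<..}"]
  unfolding stays_above_0 by (cases "a < y") (auto simp: emeasure_P_eq_measure)

text \<open>Optional stopping for the submartingale G(xi_k) + k \<eta>, stopped when the chain
  leaves (a, \<infinity>).\<close>

lemma measure_stays_above_ge:
  assumes G[measurable]: "G \<in> borel_measurable borel" and G_bounded: "\<And>y. \<bar>G y\<bar> \<le> 1"
    and G_below: "\<And>y. y \<in> X \<Longrightarrow> y \<le> a \<Longrightarrow> G y \<le> 0" and \<eta>: "0 \<le> \<eta>"
    and G_step: "\<And>x. x \<in> X \<Longrightarrow> a < x \<Longrightarrow> G x - \<eta> \<le> (\<integral>y. G y \<partial>K x)"
  shows "y \<in> X \<Longrightarrow> G y - real n * \<eta> \<le> measure (P y) (stays_above a n)"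
proof (induction n arbitrary: y)
  case 0
  then show ?case using measure_stays_above_0[OF 0] G_below[OF 0] G_bounded[of y] by auto
next
  case (Suc n x)
  show ?case
  proof (cases "a < x")
    case False
    then show ?thesis using G_below[OF Suc.prems] \<eta> by (smt (verit) measure_nonneg of_nat_0_le_iff
          mult_nonneg_nonneg)
  next
    case True
    interpret K: prob_space "K x" by (rule prob_space_K)
    have int_G: "integrable (K x) G"
      using G_bounded by (intro K.integrable_const_bound[where B=1]) auto
    have int_stay: "integrable (K x) (\<lambda>y. measure (P y) (stays_above a n))"
      by (intro K.integrable_const_bound[where B=1] measurable_measure_P)
         (auto intro: prob_space.prob_le_1[OF prob_space_P])
    have "G x - real (Suc n) * \<eta> \<le> (\<integral>y. G y \<partial>K x) - real n * \<eta>"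
      using G_step[OF Suc.prems True] by (simp add: algebra_simps)
    also have "\<dots> = (\<integral>y. G y - real n * \<eta> \<partial>K x)"
      using int_G by (simp add: K.prob_space)
    also have "\<dots> \<le> (\<integral>y. measure (P y) (stays_above a n) \<partial>K x)"
      using AE_K_state_space[OF Suc.prems]
      by (intro integral_mono_AE int_stay) (auto intro: int_G elim!: eventually_mono Suc.IH)
    also have "\<dots> = measure (P x) (stays_above a (Suc n))"
      using measure_stays_above_Suc[OF Suc.prems True] by simp
    finally show ?thesis .
  qed
qed

text \<open>The defect of the test function is uniform in the scale z: the linear Taylor term is
  controlled by the drift bound, the remainder by the p-th moment of the increment.\<close>

lemma sat_pow_drift_ge:
  assumes x: "x \<in> X" "1 \<le> x" and \<gamma>: "0 \<le> \<gamma>" "\<gamma> \<le> 1" and p: "1 + \<gamma> \<le> p" "p \<le> 2"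
    and z: "1 \<le> z" and int_theta: "integrable (P x) theta"
    and int_powr: "integrable (P x) (\<lambda>w. \<bar>theta w\<bar> powr p)"
    and moment: "(\<integral>w. \<bar>theta w\<bar> powr p \<partial>P x) \<le> M"
    and C: "0 \<le> C" and drift: "-C \<le> x powr \<gamma> * mu P x"
  shows "sat_pow (1 + \<gamma>) ((x + 1) / z) - (4 * C + 4 * M) / z powr (1 + \<gamma>)
         \<le> (\<integral>y. sat_pow (1 + \<gamma>) ((y + 1) / z) \<partial>K x)"
proof -
  interpret Px: prob_space "P x" by (rule prob_space_P)
  define e where "e = 1 + \<gamma>"
  have e: "1 \<le> e" "e \<le> 2" unfolding e_def using \<gamma> by auto
  define s where "s = (x + 1) / z"
  have s: "0 < s" unfolding s_def using x z by simp
  define D where "D = sat_pow' e s / z"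
  define g where "g y = sat_pow e ((y + 1) / z)" for y
  have g_meas[measurable]: "g \<in> borel_measurable borel" unfolding g_def by measurable
  have int_g: "integrable (P x) (\<lambda>w. g (w !! 1))"
    by (intro Px.integrable_const_bound[where B=1]) (auto simp: g_def sat_pow_nonneg sat_pow_le_1)
  have AE_X: "AE w in P x. w !! 1 \<in> X"
    using AE_K_state_space[OF x(1)] unfolding distr_P_first_step[OF x(1), symmetric]
    by (subst (asm) AE_distr_iff) auto
  have "AE w in P x. g x + D * theta w - (4 / z powr p) * \<bar>theta w\<bar> powr p \<le> g (w !! 1)"
    using AE_X AE_P_start[OF x(1)]
  proof eventually_elim
    case (elim w)
    define t where "t = (w !! 1 + 1) / z"
    have t: "0 < t" unfolding t_def using elim state_space_nonneg z by (simp add: add_nonneg_pos)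
    have ts: "t - s = theta w / z"
      unfolding t_def s_def theta_def using elim z by (simp add: diff_divide_distrib[symmetric])
    have "sat_pow e s + sat_pow' e s * (t - s) - 4 * \<bar>t - s\<bar> powr p \<le> sat_pow e t"
      using p \<gamma> by (intro sat_pow_taylor_lower[OF s t e]) auto
    then show ?case
      using z unfolding g_def D_def s_def[symmetric] t_def[symmetric] ts by (simp add: powr_divide)
  qed
  then have "(\<integral>w. g x + D * theta w - (4 / z powr p) * \<bar>theta w\<bar> powr p \<partial>P x) \<le> (\<integral>w. g (w !! 1) \<partial>P x)"
    using int_theta int_powr by (intro integral_mono_AE int_g) auto
  also have "\<dots> = (\<integral>y. g y \<partial>K x)"
    unfolding distr_P_first_step[OF x(1), symmetric] by (rule integral_distr[symmetric]) auto
  finally have "g x + D * mu P x - (4 / z powr p) * (\<integral>w. \<bar>theta w\<bar> powr p \<partial>P x) \<le> (\<integral>y. g y \<partial>K x)"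
    using int_theta int_powr by (simp add: Px.prob_space mu_def)
  moreover have "(4 / z powr p) * (\<integral>w. \<bar>theta w\<bar> powr p \<partial>P x) \<le> 4 * M / z powr e"
  proof -
    have "0 \<le> (\<integral>w. \<bar>theta w\<bar> powr p \<partial>P x)" by simp
    then have M: "0 \<le> M" using moment by linarith
    have "(4 / z powr p) * (\<integral>w. \<bar>theta w\<bar> powr p \<partial>P x) \<le> (4 / z powr p) * M"
      using moment z by (intro mult_left_mono) auto
    also have "\<dots> \<le> 4 * M / z powr e"
    proof -
      have "z powr e \<le> z powr p" using z p by (intro powr_mono) (auto simp: e_def)
      then show ?thesis using M z by (simp add: frac_le mult.commute)
    qed
    finally show ?thesis .
  qed
  moreover have "- (4 * C / z powr e) \<le> D * mu P x"
    unfolding D_def e_def s_def by (rule sat_pow'_drift_term_ge[OF x(2) z \<gamma> C drift])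
  ultimately have "g x - (4 * C + 4 * M) / z powr e \<le> (\<integral>y. g y \<partial>K x)"
    by (simp add: add_divide_distrib diff_divide_distrib)
  then show ?thesis unfolding g_def e_def .
qed

lemma sat_pow_drift_uniform:
  assumes T: "cond_T X P \<alpha> \<beta> c" and \<gamma>: "0 \<le> \<gamma>" "\<gamma> < \<alpha> - 1"
    and drift: "Liminf (at_top \<sqinter> principal X) (\<lambda>x. ereal (x powr \<gamma> * mu P x)) > -\<infinity>"
  obtains x1 Kc where "0 \<le> Kc" and "\<And>x z. x \<in> X \<Longrightarrow> x1 \<le> x \<Longrightarrow> 1 \<le> z \<Longrightarrow>
    sat_pow (1 + \<gamma>) ((x + 1) / z) - Kc / z powr (1 + \<gamma>) \<le> (\<integral>y. sat_pow (1 + \<gamma>) ((y + 1) / z) \<partial>K x)"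
proof -
  have par: "\<alpha> < 2" "\<alpha> < \<beta>" "0 < c" using T unfolding cond_T_def by auto
  obtain x0 Y B where Y: "1 \<le> Y" and B: "0 \<le> B"
    and up: "\<And>t x. Y \<le> t \<Longrightarrow> x \<in> X \<Longrightarrow> x0 \<le> x \<Longrightarrow>
       measure (P x) {w\<in>space (P x). t < pos_part (theta w)} \<le> (5 * c / 4) * t powr (-\<alpha>)"
    and neg: "\<And>x. x \<in> X \<Longrightarrow> x0 \<le> x \<Longrightarrow> (\<integral>\<^sup>+w. ennreal (neg_part (theta w) powr \<beta>) \<partial>P x) \<le> ennreal B"
    by (rule cond_T_tail_bounds[OF T]) blast
  obtain C where C: "0 \<le> C"
    and "eventually (\<lambda>x. -C \<le> x powr \<gamma> * mu P x) (at_top \<sqinter> principal X)"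
    by (rule Liminf_gt_MInf_eventually_ge[OF drift])
  then obtain x1 where C_drift: "\<And>x. x \<in> X \<Longrightarrow> x1 \<le> x \<Longrightarrow> -C \<le> x powr \<gamma> * mu P x"
    by (auto simp: eventually_inf_principal eventually_at_top_linorder)
  define p where "p = (1 + \<gamma> + \<alpha>) / 2"
  \<comment> \<open>Between 1 + \<gamma> and \<alpha>: the p-th moment of the increment is finite, and
    |t - s|^p still dominates the Taylor remainder of sat_pow (1 + \<gamma>).\<close>
  have p: "1 + \<gamma> \<le> p" "p \<le> 2" "1 \<le> p" "p < \<alpha>" "p \<le> \<beta>" unfolding p_def using \<gamma> par by auto
  define M where "M = Y powr p + 5 * c / 4 * 2 powr p * Y powr (p - \<alpha>) / (1 - 2 powr (p - \<alpha>)) + 1 + B"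
  have "2 powr (p - \<alpha>) < (1::real)" using p by (intro powr_less_one) auto
  then have M: "0 \<le> M" unfolding M_def using par B by (simp add: add_nonneg_nonneg)
  have c: "0 \<le> 5 * c / 4" using par by simp
  note moments = prob_space.abs_powr_moment_of_tails[OF prob_space_P theta_measurable_P Y p(3-5) c B,
      folded M_def]
  show ?thesis
  proof (rule that[of "4 * C + 4 * M" "max (max x0 x1) 1"])
    show "0 \<le> 4 * C + 4 * M" using C M by simp
    fix x z :: real assume x: "x \<in> X" "max (max x0 x1) 1 \<le> x" and z: "1 \<le> z"
    then have "x0 \<le> x" "x1 \<le> x" "1 \<le> x" by auto
    note moments_x = moments[OF up[OF _ x(1) \<open>x0 \<le> x\<close>] neg[OF x(1) \<open>x0 \<le> x\<close>]]
    show "sat_pow (1 + \<gamma>) ((x + 1) / z) - (4 * C + 4 * M) / z powr (1 + \<gamma>)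
        \<le> (\<integral>y. sat_pow (1 + \<gamma>) ((y + 1) / z) \<partial>K x)"
      using \<gamma> par p(1,2)
      by (intro sat_pow_drift_ge[OF x(1) \<open>1 \<le> x\<close> _ _ _ _ z moments_x C C_drift[OF x(1) \<open>x1 \<le> x\<close>]]) auto
  qed
qed

lemma survival_prob_ge:
  assumes e: "1 \<le> e" and a: "0 \<le> a" and Kc: "0 \<le> Kc"
    and drift: "\<And>x z. x \<in> X \<Longrightarrow> a < x \<Longrightarrow> 1 \<le> z \<Longrightarrow>
        sat_pow e ((x + 1) / z) - Kc / z powr e \<le> (\<integral>v. sat_pow e ((v + 1) / z) \<partial>K x)"
    and y: "y \<in> X" "3 * (a + 1) \<le> y + 1" and n: "real n * Kc \<le> (y + 1) powr e / 12"
  shows "1 / 12 \<le> measure (P y) (stays_above a n)"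
proof -
  define z where "z = y + 1"
  have z: "1 \<le> z" using y state_space_nonneg by (auto simp: z_def)
  define G where "G v = sat_pow e ((v + 1) / z) - sat_pow e ((a + 1) / z)" for v
  have "G y - real n * (Kc / z powr e) \<le> measure (P y) (stays_above a n)"
  proof (rule measure_stays_above_ge[OF _ _ _ _ _ y(1)])
    show "G \<in> borel_measurable borel" unfolding G_def by measurable
    show "\<bar>G v\<bar> \<le> 1" for v
      unfolding G_def using sat_pow_nonneg sat_pow_le_1 by (smt (verit))
    show "0 \<le> Kc / z powr e" using Kc by simp
    show "G v \<le> 0" if "v \<in> X" "v \<le> a" for v
      using that state_space_nonneg[OF that(1)] z e
      unfolding G_def by (smt (verit) sat_pow_mono divide_right_mono divide_nonneg_nonneg)
    show "G x - Kc / z powr e \<le> (\<integral>v. G v \<partial>K x)" if "x \<in> X" "a < x" for x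
    proof -
      interpret K: prob_space "K x" by (rule prob_space_K)
      have "integrable (K x) (\<lambda>v. sat_pow e ((v + 1) / z))"
        by (intro K.integrable_const_bound[where B=1]) (auto simp: sat_pow_nonneg sat_pow_le_1)
      then have "(\<integral>v. G v \<partial>K x) = (\<integral>v. sat_pow e ((v + 1) / z) \<partial>K x) - sat_pow e ((a + 1) / z)"
        unfolding G_def by (simp add: K.prob_space)
      then show ?thesis using drift[OF that z] unfolding G_def by simp
    qed
  qed
  moreover have "1 / 6 \<le> G y"
  proof -
    define r where "r = (a + 1) / z"
    have r: "0 \<le> r" "r \<le> 1 / 3" unfolding r_def using y a z by (auto simp: z_def field_simps)
    have "sat_pow e r \<le> r powr e" by (rule sat_pow_le_powr)
    also have "\<dots> \<le> r powr 1" using r e by (intro powr_mono') auto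
    finally have "sat_pow e r \<le> 1 / 3" using r by (cases "r = 0") auto
    moreover have "sat_pow e 1 = 1 / 2" unfolding sat_pow_def by simp
    ultimately show ?thesis unfolding G_def r_def[symmetric] using z by (simp add: z_def)
  qed
  moreover have "real n * (Kc / z powr e) \<le> 1 / 12"
    using n z by (simp add: z_def divide_simps mult.commute)
  ultimately show ?thesis by linarith
qed

text \<open>The event xi_1 \<in> (T, 2T] contains T - x < theta \<le> 2T - x, whose probability is a
  difference of two tail probabilities of the increment.\<close>

lemma measure_K_jump_ge:
  assumes x: "x \<in> X" and c: "0 < c" and \<alpha>: "1 \<le> \<alpha>" and Y: "1 \<le> Y"
    and low: "\<And>t. Y \<le> t \<Longrightarrow> (3 * c / 4) * t powr (-\<alpha>) \<le> measure (P x) {w\<in>space (P x). t < pos_part (theta w)}"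
    and up: "\<And>t. Y \<le> t \<Longrightarrow> measure (P x) {w\<in>space (P x). t < pos_part (theta w)} \<le> (5 * c / 4) * t powr (-\<alpha>)"
    and T: "4 * x \<le> T" "x + Y \<le> T"
  shows "(c / 28) * T powr (-\<alpha>) \<le> measure (K x) {T<..2*T}"
proof -
  interpret Px: prob_space "P x" by (rule prob_space_P)
  have x0: "0 \<le> x" using x state_space_nonneg by auto
  have T0: "0 < T" using T Y x0 by linarith
  define t1 where "t1 = T - x"
  define t2 where "t2 = 2 * T - x"
  have t1: "Y \<le> t1" "t1 \<le> T" "0 < t1" using T x0 Y by (auto simp: t1_def)
  have t2: "Y \<le> t2" "t1 \<le> t2" "7 / 4 * T \<le> t2" using T x0 Y T0 by (auto simp: t1_def t2_def)
  define A where "A t = {w\<in>space (P x). t < pos_part (theta w)}" for t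
  have A[measurable]: "A t \<in> sets (P x)" for t unfolding A_def pos_part_def by measurable
  have "measure (P x) (A t1 - A t2) \<le> measure (P x) {w\<in>space (P x). w !! 1 \<in> {T<..2*T}}"
  proof (rule Px.finite_measure_mono_AE)
    show "AE w in P x. w \<in> A t1 - A t2 \<longrightarrow> w \<in> {w\<in>space (P x). w !! 1 \<in> {T<..2*T}}"
      using AE_P_start[OF x] t1(3)
      by (auto elim!: eventually_mono simp: A_def pos_part_def theta_def t1_def t2_def split: if_splits)
  qed measurable
  also have "\<dots> = measure (K x) {T<..2*T}"
    unfolding distr_P_first_step[OF x, symmetric] by (subst measure_distr) (auto simp: vimage_def Int_def conj_commute)
  finally have "measure (P x) (A t1 - A t2) \<le> measure (K x) {T<..2*T}" .
  moreover have "A t2 \<subseteq> A t1" unfolding A_def using t2 by auto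
  ultimately have jump: "measure (P x) (A t1) - measure (P x) (A t2) \<le> measure (K x) {T<..2*T}"
    by (simp add: Px.finite_measure_Diff)
  have "(3 * c / 4) * T powr (-\<alpha>) \<le> (3 * c / 4) * t1 powr (-\<alpha>)"
    using t1 \<alpha> c by (intro mult_left_mono powr_mono2') auto
  also have "\<dots> \<le> measure (P x) (A t1)" unfolding A_def by (rule low[OF t1(1)])
  finally have lower: "(3 * c / 4) * T powr (-\<alpha>) \<le> measure (P x) (A t1)" .
  have "measure (P x) (A t2) \<le> (5 * c / 4) * t2 powr (-\<alpha>)" unfolding A_def by (rule up[OF t2(1)])
  also have "t2 powr (-\<alpha>) \<le> (7 / 4 * T) powr (-\<alpha>)" using t2 T0 \<alpha> by (intro powr_mono2') auto
  also have "(7 / 4 * T) powr (-\<alpha>) = (7 / 4) powr (-\<alpha>) * T powr (-\<alpha>)" by (rule powr_mult)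
  also have "(7 / 4 :: real) powr (-\<alpha>) \<le> (7 / 4) powr (-1)" using \<alpha> by (intro powr_mono) auto
  also have "(7 / 4 :: real) powr (-1) = 4 / 7" by (simp add: powr_minus_divide)
  finally have upper: "measure (P x) (A t2) \<le> (5 * c / 7) * T powr (-\<alpha>)"
    using c T0 by (simp add: mult_left_mono)
  show ?thesis using jump lower upper by (simp add: algebra_simps)
qed

lemma emeasure_jump_then_stay_ge:
  assumes x: "x \<in> X" "a < x" and I[measurable]: "I \<in> sets borel"
    and stay: "\<And>y. y \<in> X \<Longrightarrow> y \<in> I \<Longrightarrow> b \<le> measure (P y) (stays_above a n)"
  shows "ennreal (b * measure (K x) I) \<le> emeasure (P x) ({w. w !! 1 \<in> I} \<inter> stays_above a (Suc n))"
proof (cases "0 \<le> b")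
  case True
  interpret K: prob_space "K x" by (rule prob_space_K)
  have "ennreal (b * measure (K x) I) = ennreal b * emeasure (K x) I"
    using True by (simp add: K.emeasure_eq_measure ennreal_mult)
  also have "\<dots> = (\<integral>\<^sup>+y. ennreal b * indicator I y \<partial>K x)"
    by (rule nn_integral_cmult_indicator[symmetric]) (simp add: sets_K)
  also have "\<dots> \<le> (\<integral>\<^sup>+y. indicator I y * emeasure (P y) (stays_above a n) \<partial>K x)"
    using AE_K_state_space[OF x(1)]
    by (intro nn_integral_mono_AE) (auto elim!: eventually_mono
        simp: indicator_def emeasure_P_eq_measure intro!: ennreal_leI stay)
  also have "\<dots> = emeasure (P x) ({w. w !! 1 \<in> I} \<inter> stays_above a (Suc n))"
    by (rule emeasure_first_step_stays_above[OF x I, symmetric])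
  finally show ?thesis .
next
  case False
  then show ?thesis by (simp add: ennreal_neg mult_nonpos_nonneg)
qed

lemma dyadic_contribution_ge:
  assumes x: "x \<in> X" "a < x" and a: "0 \<le> a" and q: "0 < q" and e: "1 \<le> e" "\<alpha> \<le> e * q"
    and c: "0 < c" and \<alpha>: "1 \<le> \<alpha>" and Y: "1 \<le> Y" and Kc: "0 \<le> Kc"
    and low: "\<And>t. Y \<le> t \<Longrightarrow> (3 * c / 4) * t powr (-\<alpha>) \<le> measure (P x) {w\<in>space (P x). t < pos_part (theta w)}"
    and up: "\<And>t. Y \<le> t \<Longrightarrow> measure (P x) {w\<in>space (P x). t < pos_part (theta w)} \<le> (5 * c / 4) * t powr (-\<alpha>)"
    and drift: "\<And>x z. x \<in> X \<Longrightarrow> a < x \<Longrightarrow> 1 \<le> z \<Longrightarrow>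
        sat_pow e ((x + 1) / z) - Kc / z powr e \<le> (\<integral>v. sat_pow e ((v + 1) / z) \<partial>K x)"
    and T: "4 * x \<le> T" "x + Y \<le> T" "3 * (a + 1) \<le> T" "24 * (Kc + 1) \<le> T"
  defines "n \<equiv> nat \<lfloor>T powr e / (12 * (Kc + 1))\<rfloor>"
  shows "ennreal (c / 336 / (24 * (Kc + 1)) powr q)
    \<le> ennreal (real n powr q) * emeasure (P x) ({w. w !! 1 \<in> {T<..2*T}} \<inter> stays_above a (Suc n))"
proof -
  define L where "L = 24 * (Kc + 1)"
  have L: "24 \<le> L" unfolding L_def using Kc by simp
  have T1: "1 \<le> T" using T(4) L unfolding L_def by linarith
  have "T \<le> T powr e" using powr_mono[of 1 e T] T1 e by simp
  then have v: "2 \<le> T powr e / (12 * (Kc + 1))" using T(4) Kc by (simp add: field_simps)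
  have n_upper: "real n * Kc \<le> T powr e / 12"
  proof -
    have "real n \<le> T powr e / (12 * (Kc + 1))" unfolding n_def using v by simp
    then show ?thesis using Kc by (simp add: field_simps)
  qed
  have n_lower: "T powr e / L \<le> real n"
    using nat_floor_ge_half[of "T powr e / (12 * (Kc + 1))"] v unfolding n_def L_def by simp
  have stay: "ennreal (1 / 12 * measure (K x) {T<..2*T})
      \<le> emeasure (P x) ({w. w !! 1 \<in> {T<..2*T}} \<inter> stays_above a (Suc n))"
  proof (rule emeasure_jump_then_stay_ge[OF x])
    fix y assume y: "y \<in> X" "y \<in> {T<..2*T}"
    have "T powr e \<le> (y + 1) powr e" using y T1 e by (intro powr_mono2) auto
    then have "real n * Kc \<le> (y + 1) powr e / 12" using n_upper by linarith
    then show "1 / 12 \<le> measure (P y) (stays_above a n)"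
      using y T(3) by (intro survival_prob_ge[OF e(1) a Kc drift]) auto
  qed simp
  have jump: "(c / 28) * T powr (-\<alpha>) \<le> measure (K x) {T<..2*T}"
    by (rule measure_K_jump_ge[OF x(1) c \<alpha> Y low up T(1,2)])
  have "T powr \<alpha> / L powr q \<le> (T powr e / L) powr q"
    using T1 L e q by (simp add: powr_divide powr_powr divide_right_mono powr_mono mult.commute)
  also have "\<dots> \<le> real n powr q" using n_lower L T1 q by (intro powr_mono2) auto
  finally have Tn: "T powr \<alpha> / L powr q \<le> real n powr q" .
  have "c / 336 / L powr q = (T powr \<alpha> / L powr q) * (c / 336 * T powr (-\<alpha>))"
    using T1 by (simp add: powr_minus field_simps)
  also have "\<dots> \<le> real n powr q * (c / 336 * T powr (-\<alpha>))"
    using Tn c by (intro mult_right_mono) auto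
  also have "\<dots> \<le> real n powr q * (1 / 12 * measure (K x) {T<..2*T})"
    using jump by (intro mult_left_mono) auto
  finally have "ennreal (c / 336 / L powr q) \<le> ennreal (real n powr q) * ennreal (1 / 12 * measure (K x) {T<..2*T})"
    by (simp add: ennreal_mult[symmetric] ennreal_leI)
  also have "\<dots> \<le> ennreal (real n powr q) * emeasure (P x) ({w. w !! 1 \<in> {T<..2*T}} \<inter> stays_above a (Suc n))"
    by (rule mult_left_mono[OF stay]) simp
  finally show ?thesis unfolding L_def .
qed

lemma nn_integral_hit_time_pow_infinite:
  assumes x: "x \<in> X" "a < x" and a: "0 \<le> a" and q: "0 < q" and e: "1 \<le> e" "\<alpha> \<le> e * q"
    and c: "0 < c" and \<alpha>: "1 \<le> \<alpha>" and Y: "1 \<le> Y" and Kc: "0 \<le> Kc"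
    and low: "\<And>t. Y \<le> t \<Longrightarrow> (3 * c / 4) * t powr (-\<alpha>) \<le> measure (P x) {w\<in>space (P x). t < pos_part (theta w)}"
    and up: "\<And>t. Y \<le> t \<Longrightarrow> measure (P x) {w\<in>space (P x). t < pos_part (theta w)} \<le> (5 * c / 4) * t powr (-\<alpha>)"
    and drift: "\<And>x z. x \<in> X \<Longrightarrow> a < x \<Longrightarrow> 1 \<le> z \<Longrightarrow>
        sat_pow e ((x + 1) / z) - Kc / z powr e \<le> (\<integral>v. sat_pow e ((v + 1) / z) \<partial>K x)"
  shows "(\<integral>\<^sup>+w. hit_time_pow q a w \<partial>P x) = \<infinity>"
proof -
  define \<delta> where "\<delta> = c / 336 / (24 * (Kc + 1)) powr q"
  have \<delta>: "0 < \<delta>" unfolding \<delta>_def using c Kc by simp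
  obtain J :: nat where J: "max (max (4 * x) (x + Y)) (max (3 * (a + 1)) (24 * (Kc + 1))) < 2^J"
    using real_arch_pow[of 2 "max (max (4 * x) (x + Y)) (max (3 * (a + 1)) (24 * (Kc + 1)))"] by auto
  define T where "T j = (2::real)^(j + J)" for j
  have T: "4 * x \<le> T j" "x + Y \<le> T j" "3 * (a + 1) \<le> T j" "24 * (Kc + 1) \<le> T j" for j
  proof -
    have "(2::real)^J \<le> T j" unfolding T_def by (intro power_increasing) auto
    then show "4 * x \<le> T j" "x + Y \<le> T j" "3 * (a + 1) \<le> T j" "24 * (Kc + 1) \<le> T j"
      using J by auto
  qed
  define n where "n j = nat \<lfloor>T j powr e / (12 * (Kc + 1))\<rfloor>" for j
  define F where "F j = {w. w !! 1 \<in> {T j<..2 * T j}} \<inter> stays_above a (Suc (n j))" for j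
  have F_meas: "F j \<in> sets (P x)" for j
  proof -
    have "{w \<in> space paths. w !! 1 \<in> {T j<..2 * T j}} \<inter> stays_above a (Suc (n j)) \<in> sets paths"
      by measurable
    then show ?thesis by (simp add: F_def sets_P space_paths)
  qed
  have "disjoint_family F"
    unfolding disjoint_family_on_def
  proof (intro ballI impI)
    fix i j :: nat assume "i \<noteq> j"
    then have "{(2::real)^(i + J)<..2^Suc (i + J)} \<inter> {2^(j + J)<..2^Suc (j + J)} = {}"
      using disjoint_family_dyadic_shells unfolding disjoint_family_on_def by simp
    then show "F i \<inter> F j = {}" unfolding F_def T_def by auto
  qed
  have "\<infinity> = (\<Sum>j. ennreal \<delta>)" using suminf_ennreal_const_infinite[OF \<delta>] by simp
  also have "\<dots> \<le> (\<Sum>j. ennreal (real (n j) powr q) * emeasure (P x) (F j))"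
    unfolding \<delta>_def n_def F_def
    by (intro suminf_le summableI dyadic_contribution_ge[OF x a q e c \<alpha> Y Kc low up drift T])
  also have "\<dots> = (\<integral>\<^sup>+w. (\<Sum>j. ennreal (real (n j) powr q) * indicator (F j) w) \<partial>P x)"
    using F_meas by (subst nn_integral_suminf) (auto simp: nn_integral_cmult_indicator)
  also have "\<dots> \<le> (\<integral>\<^sup>+w. hit_time_pow q a w \<partial>P x)"
  proof (intro nn_integral_mono suminf_indicator_disjoint_le[OF \<open>disjoint_family F\<close>])
    fix w j assume "w \<in> F j"
    then have "w \<in> stays_above a (n j)" by (auto simp: F_def stays_above_def)
    then show "ennreal (real (n j) powr q) \<le> hit_time_pow q a w"
      using q by (intro hit_time_pow_ge) auto
  qed
  finally show ?thesis by (simp add: top_unique)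
qed

end

theorem lemma5p1:
  fixes X :: "real set" and K :: "real \<Rightarrow> real measure" and P :: "real \<Rightarrow> real stream measure"
    and \<alpha> \<beta> c \<gamma> :: real
  assumes "markov_chain_on X K P"
    and "cond_T X P \<alpha> \<beta> c"
    and "0 \<le> \<gamma>" and "\<gamma> < \<alpha> - 1"
    and "Liminf (at_top \<sqinter> principal X) (\<lambda>x. ereal (x powr \<gamma> * mu P x)) > -\<infinity>"
  shows "\<forall>q \<ge> \<alpha> / (1 + \<gamma>). \<exists>a0. \<forall>a \<ge> a0. \<forall>x\<in>X. x > a \<longrightarrow>
           (\<integral>\<^sup>+w. hit_time_pow q a w \<partial>P x) = \<infinity>"
proof (intro allI impI)
  fix q assume q: "\<alpha> / (1 + \<gamma>) \<le> q"
  interpret real_markov_chain X K P by unfold_locales (rule assms(1))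
  have \<alpha>: "1 < \<alpha>" and c: "0 < c" using assms(2) unfolding cond_T_def by auto
  have q_pos: "0 < q" and \<alpha>_le: "\<alpha> \<le> (1 + \<gamma>) * q"
    using q \<alpha> assms(3) by (auto simp: divide_le_eq mult.commute intro: less_le_trans[of 0 "\<alpha> / (1 + \<gamma>)"])
  obtain x0 Y where Y: "1 \<le> Y"
    and up: "\<And>t x. Y \<le> t \<Longrightarrow> x \<in> X \<Longrightarrow> x0 \<le> x \<Longrightarrow>
       measure (P x) {w\<in>space (P x). t < pos_part (theta w)} \<le> (5 * c / 4) * t powr (-\<alpha>)"
    and low: "\<And>t x. Y \<le> t \<Longrightarrow> x \<in> X \<Longrightarrow> x0 \<le> x \<Longrightarrow>
       (3 * c / 4) * t powr (-\<alpha>) \<le> measure (P x) {w\<in>space (P x). t < pos_part (theta w)}"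
    by (rule cond_T_tail_bounds[OF assms(2)]) blast
  obtain x1 Kc where Kc: "0 \<le> Kc" and drift: "\<And>x z. x \<in> X \<Longrightarrow> x1 \<le> x \<Longrightarrow> 1 \<le> z \<Longrightarrow>
    sat_pow (1 + \<gamma>) ((x + 1) / z) - Kc / z powr (1 + \<gamma>) \<le> (\<integral>y. sat_pow (1 + \<gamma>) ((y + 1) / z) \<partial>K x)"
    by (rule sat_pow_drift_uniform[OF assms(2-5)]) blast
  show "\<exists>a0. \<forall>a\<ge>a0. \<forall>x\<in>X. a < x \<longrightarrow> (\<integral>\<^sup>+w. hit_time_pow q a w \<partial>P x) = \<infinity>"
  proof (intro exI[of _ "max (max x0 x1) 0"] allI impI ballI)
    fix a x assume a: "max (max x0 x1) 0 \<le> a" and x: "x \<in> X" "a < x"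
    then have "x0 \<le> x" by simp
    show "(\<integral>\<^sup>+w. hit_time_pow q a w \<partial>P x) = \<infinity>"
      using a assms(3) \<alpha> by (intro nn_integral_hit_time_pow_infinite[OF x _ q_pos _ \<alpha>_le c _ Y Kc
            low[OF _ x(1) \<open>x0 \<le> x\<close>] up[OF _ x(1) \<open>x0 \<le> x\<close>] drift]) auto
  qed
qed

end
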